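(* Let $T, N$ be positive integers and $\delta>0$. Let $L\in\mathbb{R}^{T\times T}$ be the lower triangular matrix with $L_{jk}=\delta$ for $k\le j$ and $L_{jk}=0$ for $k>j$, and let $H := (L,\,-L,\,I_T,\,-I_T)\in\mathbb{R}^{4T\times T}$ (vertical stacking). For $i=1,\dots,N$ let $h_i := (\overline{x}_i,\,-\underline{x}_i,\,\overline{u}_i,\,-\underline{u}_i)\in\mathbb{R}^{4T}$ for given vectors $\overline{x}_i,\underline{x}_i,\overline{u}_i,\underline{u}_i\in\mathbb{R}^T$, and suppose each set $\mathbb{U}_i := \{u\in\mathbb{R}^T \mid Hu\le h_i\}$ is nonempty. Let $h_0 := \frac{1}{N}\sum_{i=1}^N h_i$, $\mathbb{U}_0 := \{u\in\mathbb{R}^T\mid Hu\le h_0\}$, and $\mathbb{U} := \mathbb{U}_1+\dots+\mathbb{U}_N = \{\sum_{i=1}^N u_i \mid u_i\in\mathbb{U}_i\}$ (Minkowski sum). Let $\overline{p}\in\mathbb{R}^T$ and $P\in\mathbb{R}^{T\times T}$. If there exist $\gamma_i\in\mathbb{R}^T$, $\Gamma_i\in\mathbb{R}^{T\times T}$ and $\Lambda_i\in\mathbb{R}^{4T\times 4T}$ for $i=1,\dots,N$ such that $[\,\overline{p},\,P\,] = \sum_{i=1}^N [\,\gamma_i,\,\Gamma_i\,]$ (i.e. $\overline{p}=\sum_i\gamma_i$ and $P=\sum_i\Gamma_i$), and for each $i=1,\dots,N$: $\Lambda_i\ge 0$ (entrywise), $\Lambda_i H = H\Gamma_i$, and $\Lambda_i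 h_0 \le h_i - H\gamma_i$ (entrywise), then $\overline{p}+P\mathbb{U}_0 \subseteq \mathbb{U}$.
   Context: For a vector $\gamma$ and matrix $\Gamma$, $\gamma+\Gamma\mathbb{X} := \{\gamma+\Gamma x\mid x\in\mathbb{X}\}$. Vector and matrix inequalities are entrywise. $(A,B)$ denotes vertical stacking of $A$ and $B$; $[\,a,\,B\,]$ denotes horizontal concatenation of a column $a$ and matrix $B$. *)

theory Defs
  imports "HOL-Analysis.Analysis" "HOL-Library.Numeral_Type"
begin

text \<open>Rows of the 4T-dimensional space are indexed by pairs (b, j) with block b in the
  type 4 (values 0,1,2,3) and j in the T-index type 't.\<close>

definition Lmat :: "real \<Rightarrow> real^('t::{finite,linorder})^('t::{finite,linorder})" where
  "Lmat \<delta> = (\<chi> j k. if k \<le> j then \<delta> else 0)"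

definition Hmat :: "real \<Rightarrow> real^('t::{finite,linorder})^(4 \<times> ('t::{finite,linorder}))" where
  "Hmat \<delta> = (\<chi> r. let b = fst r; j = snd r in
      if b = 0 then Lmat \<delta> $ j
      else if b = 1 then - (Lmat \<delta> $ j)
      else if b = 2 then (mat 1 :: real^('t::{finite,linorder})^('t::{finite,linorder})) $ j
      else - ((mat 1 :: real^('t::{finite,linorder})^('t::{finite,linorder})) $ j))"

definition stack4 :: "real^'t \<Rightarrow> real^'t \<Rightarrow> real^'t \<Rightarrow> real^'t \<Rightarrow> real^(4 \<times> 't)" where
  "stack4 a b c d = (\<chi> r. let k = fst r; j = snd r in
      if k = 0 then a $ j else if k = 1 then b $ j else if k = 2 then c $ j else d $ j)"

definition polyset :: "real^'t^'m \<Rightarrow> real^'m \<Rightarrow> (real^'t) set" where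
  "polyset H h = {u. \<forall>r. (H *v u) $ r \<le> h $ r}"

end

theory Submission
  imports Defs
begin

text \<open>For \<open>u \<in> \<U>\<^sub>0\<close> put \<open>u\<^sub>i = \<gamma>\<^sub>i + \<Gamma>\<^sub>i u\<close>.  Then
  \<open>H u\<^sub>i = H \<gamma>\<^sub>i + \<Lambda>\<^sub>i H u \<le> H \<gamma>\<^sub>i + \<Lambda>\<^sub>i h\<^sub>0 \<le> h\<^sub>i\<close>, using \<open>\<Lambda>\<^sub>i \<ge> 0\<close> to multiply
  \<open>H u \<le> h\<^sub>0\<close> by \<open>\<Lambda>\<^sub>i\<close>, so \<open>u\<^sub>i \<in> \<U>\<^sub>i\<close>; and \<open>\<Sum>\<^sub>i u\<^sub>i = p + P u\<close>.
  Nothing specific to \<open>H\<close> or the \<open>h\<^sub>i\<close> is used.\<close>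

lemma nonneg_matrix_vector_mult_mono:
  fixes A :: "real^'n^'m"
  assumes "\<forall>r s. A $ r $ s \<ge> 0" and "\<forall>j. x $ j \<le> y $ j"
  shows "(A *v x) $ r \<le> (A *v y) $ r"
  unfolding matrix_vector_mult_def
  using assms by (auto intro!: sum_mono mult_left_mono)

lemma sum_matrix_vector_mult:
  fixes G :: "'i \<Rightarrow> real^'n^'m"
  assumes "finite I"
  shows "sum G I *v u = (\<Sum>i\<in>I. G i *v u)"
  using assms by (induction I rule: finite_induct) (auto simp: matrix_vector_mult_add_rdistrib)

lemma affine_image_polyset_subset:
  fixes H :: "real^'n^'m" and \<Lambda> :: "real^'m^'m" and \<Gamma> :: "real^'n^'n"
  assumes nonneg: "\<forall>r s. \<Lambda> $ r $ s \<ge> 0"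
    and comm: "\<Lambda> ** H = H ** \<Gamma>"
    and rhs: "\<forall>r. (\<Lambda> *v h\<^sub>0) $ r \<le> (h - H *v \<gamma>) $ r"
    and u: "u \<in> polyset H h\<^sub>0"
  shows "\<gamma> + \<Gamma> *v u \<in> polyset H h"
  unfolding polyset_def
proof (intro CollectI allI)
  fix r
  have "H *v (\<gamma> + \<Gamma> *v u) = H *v \<gamma> + \<Lambda> *v (H *v u)"
    by (simp add: matrix_vector_right_distrib matrix_vector_mul_assoc comm)
  moreover have "(\<Lambda> *v (H *v u)) $ r \<le> (\<Lambda> *v h\<^sub>0) $ r"
    using u nonneg by (auto simp: polyset_def intro: nonneg_matrix_vector_mult_mono)
  ultimately show "(H *v (\<gamma> + \<Gamma> *v u)) $ r \<le> h $ r"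
    using rhs[rule_format, of r] by simp
qed

lemma affine_image_subset_minkowski_sum:
  fixes \<gamma> :: "'i \<Rightarrow> real^'n" and \<Gamma> :: "'i \<Rightarrow> real^'n^'n"
  assumes "finite I"
    and parts: "\<And>i. i \<in> I \<Longrightarrow> \<gamma> i + \<Gamma> i *v u \<in> U i"
  shows "(\<Sum>i\<in>I. \<gamma> i) + (\<Sum>i\<in>I. \<Gamma> i) *v u
           \<in> {v. \<exists>us. (\<forall>i\<in>I. us i \<in> U i) \<and> v = (\<Sum>i\<in>I. us i)}"
proof -
  have "(\<Sum>i\<in>I. \<gamma> i) + (\<Sum>i\<in>I. \<Gamma> i) *v u = (\<Sum>i\<in>I. \<gamma> i + \<Gamma> i *v u)"
    using assms(1) by (simp add: sum.distrib sum_matrix_vector_mult)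
  then show ?thesis
    using parts by (intro CollectI exI[where x = "\<lambda>i. \<gamma> i + \<Gamma> i *v u"]) simp
qed

theorem theorem1:
  fixes \<delta> :: real and N :: nat
    and xup xlo uup ulo :: "nat \<Rightarrow> real^('t::{finite,linorder})"
    and pbar :: "real^('t::{finite,linorder})" and P :: "real^('t::{finite,linorder})^('t::{finite,linorder})"
  assumes "N > 0" and "\<delta> > 0"
    and nonempty: "\<forall>i\<in>{1..N}. polyset (Hmat \<delta>) (stack4 (xup i) (- xlo i) (uup i) (- ulo i)) \<noteq> {}"
    and "\<exists>(\<gamma> :: nat \<Rightarrow> real^('t::{finite,linorder})) (\<Gamma> :: nat \<Rightarrow> real^('t::{finite,linorder})^('t::{finite,linorder})) (\<Lambda> :: nat \<Rightarrow> real^(4\<times>('t::{finite,linorder}))^(4\<times>('t::{finite,linorder}))).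
          pbar = (\<Sum>i=1..N. \<gamma> i) \<and> P = (\<Sum>i=1..N. \<Gamma> i) \<and>
          (\<forall>i\<in>{1..N}.
             (\<forall>r s. \<Lambda> i $ r $ s \<ge> 0) \<and>
             \<Lambda> i ** Hmat \<delta> = Hmat \<delta> ** \<Gamma> i \<and>
             (\<forall>r. (\<Lambda> i *v ((1 / real N) *\<^sub>R (\<Sum>k=1..N. stack4 (xup k) (- xlo k) (uup k) (- ulo k)))) $ r
                   \<le> (stack4 (xup i) (- xlo i) (uup i) (- ulo i) - Hmat \<delta> *v \<gamma> i) $ r))"
  shows "(\<lambda>u. pbar + P *v u) ` polyset (Hmat \<delta>) ((1 / real N) *\<^sub>R (\<Sum>k=1..N. stack4 (xup k) (- xlo k) (uup k) (- ulo k)))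
         \<subseteq> {v. \<exists>us :: nat \<Rightarrow> real^('t::{finite,linorder}). (\<forall>i\<in>{1..N}. us i \<in> polyset (Hmat \<delta>) (stack4 (xup i) (- xlo i) (uup i) (- ulo i))) \<and> v = (\<Sum>i=1..N. us i)}"
proof
  let ?h = "\<lambda>i. stack4 (xup i) (- xlo i) (uup i) (- ulo i)"
  let ?h\<^sub>0 = "(1 / real N) *\<^sub>R (\<Sum>k=1..N. ?h k)"
  obtain \<gamma> \<Gamma> \<Lambda> where pbar: "pbar = (\<Sum>i=1..N. \<gamma> i)" and P: "P = (\<Sum>i=1..N. \<Gamma> i)"
    and certificate: "\<And>i. i \<in> {1..N} \<Longrightarrow> (\<forall>r s. \<Lambda> i $ r $ s \<ge> 0) \<and>
          \<Lambda> i ** Hmat \<delta> = Hmat \<delta> ** \<Gamma> i \<and>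
          (\<forall>r. (\<Lambda> i *v ?h\<^sub>0) $ r \<le> (?h i - Hmat \<delta> *v \<gamma> i) $ r)"
    using assms(4) by blast
  fix v
  assume "v \<in> (\<lambda>u. pbar + P *v u) ` polyset (Hmat \<delta>) ?h\<^sub>0"
  then obtain u where v: "v = pbar + P *v u" and u: "u \<in> polyset (Hmat \<delta>) ?h\<^sub>0"
    by blast
  have "\<gamma> i + \<Gamma> i *v u \<in> polyset (Hmat \<delta>) (?h i)" if "i \<in> {1..N}" for i
    using certificate[OF that] u by (blast intro: affine_image_polyset_subset)
  then show "v \<in> {v. \<exists>us. (\<forall>i\<in>{1..N}. us i \<in> polyset (Hmat \<delta>) (?h i)) \<and> v = (\<Sum>i=1..N. us i)}"
    unfolding v pbar P by (intro affine_image_subset_minkowski_sum) auto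
qed

end
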